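(* For $|q|<1$ and nonzero complex $z$ (with the expressions defined), \begin{align*} S_{F3}(z,q)&=\frac{(zq,z^{-1}q,q^2;q^2)_\infty}{(z,z^{-1},q;q^2)_\infty}-\frac{(q;q)_\infty}{(z,z^{-1};q^2)_\infty},\\ S_{G4}(z,q)&=\frac{z(-z^{-1}q,-zq^3,q^4;q^4)_\infty}{(1+z)(z,z^{-1};q^2)_\infty}+\frac{(-zq,-z^{-1}q^3,q^4;q^4)_\infty}{(1+z)(z,z^{-1};q^2)_\infty}-\frac{(q^2;q^2)_\infty}{(q,z,z^{-1};q^2)_\infty},\\ S_{AG4}(z,q)&=\frac{z(-zq,-z^{-1}q^3,q^4;q^4)_\infty}{(1+z)(z,z^{-1};q^2)_\infty}+\frac{(-z^{-1}q,-zq^3,q^4;q^4)_\infty}{(1+z)(z,z^{-1};q^2)_\infty}-\frac{(q^2;q^2)_\infty}{(q,z,z^{-1};q^2)_\infty}. \end{align*}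
   Context: Notation: $(z;q)_n=\prod_{j=0}^{n-1}(1-zq^j)$, $(z;q)_\infty=\prod_{j\ge0}(1-zq^j)$, $(z_1,\dots,z_k;q)_n=(z_1;q)_n\cdots(z_k;q)_n$ (also for $n=\infty$). Define \begin{align*} S_{F3}(z,q)&=\frac{(q;q)_\infty}{(z,z^{-1};q^2)_\infty}\sum_{n=1}^\infty\frac{(z,z^{-1};q^2)_nq^n}{(q;q)_{2n}},\\ S_{G4}(z,q)&=\frac{(q^4;q^4)_\infty(-q;q^2)_\infty}{(z,z^{-1};q^2)_\infty}\sum_{n=1}^\infty\frac{(z,z^{-1};q^2)_n(-1)^nq^{n^2+2n}}{(q^4;q^4)_n(-q;q^2)_n},\\ S_{AG4}(z,q)&=\frac{(q^4;q^4)_\infty(-q;q^2)_\infty}{(z,z^{-1};q^2)_\infty}\sum_{n=1}^\infty\frac{(z,z^{-1};q^2)_n(-1)^nq^{n^2}}{(q^4;q^4)_n(-q;q^2)_n}. \end{align*} *)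

theory Defs
  imports "HOL-Analysis.Analysis"
begin

definition qpoch :: "complex \<Rightarrow> complex \<Rightarrow> nat \<Rightarrow> complex" where
  "qpoch z q n = (\<Prod>j<n. 1 - z * q ^ j)"

definition qpoch_inf :: "complex \<Rightarrow> complex \<Rightarrow> complex" where
  "qpoch_inf z q = (\<Prod>j. 1 - z * q ^ j)"

definition S_F3 :: "complex \<Rightarrow> complex \<Rightarrow> complex" where
  "S_F3 z q = qpoch_inf q q / (qpoch_inf z (q^2) * qpoch_inf (inverse z) (q^2)) *
     (\<Sum>n. if n = 0 then 0 else
        qpoch z (q^2) n * qpoch (inverse z) (q^2) n * q ^ n / qpoch q q (2 * n))"

definition S_G4 :: "complex \<Rightarrow> complex \<Rightarrow> complex" where
  "S_G4 z q = qpoch_inf (q^4) (q^4) * qpoch_inf (-q) (q^2)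
       / (qpoch_inf z (q^2) * qpoch_inf (inverse z) (q^2)) *
     (\<Sum>n. if n = 0 then 0 else
        qpoch z (q^2) n * qpoch (inverse z) (q^2) n * (-1) ^ n * q ^ (n^2 + 2*n)
          / (qpoch (q^4) (q^4) n * qpoch (-q) (q^2) n))"

definition S_AG4 :: "complex \<Rightarrow> complex \<Rightarrow> complex" where
  "S_AG4 z q = qpoch_inf (q^4) (q^4) * qpoch_inf (-q) (q^2)
       / (qpoch_inf z (q^2) * qpoch_inf (inverse z) (q^2)) *
     (\<Sum>n. if n = 0 then 0 else
        qpoch z (q^2) n * qpoch (inverse z) (q^2) n * (-1) ^ n * q ^ (n^2)
          / (qpoch (q^4) (q^4) n * qpoch (-q) (q^2) n))"

end

theory Submission
  imports Defs
begin

text \<open>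
  All three sums are series of the shape sum_n a_n x^n / (x;p)_n. For the coefficients
  (z;p)_n (1/z;p)_n / (p;p)_n such a series satisfies the q-difference equation
  (1 - x)^2 F(x) = (1 - xz)(1 - x/z) F(px), and for (b;p)_n (p/b;p)_n p^(n(n-1)/2) / (p^2;p^2)_n
  it satisfies (1 - x)(1 - xp) F(x) = (1 - xp/b)(1 - bx) F(p^2 x); in both cases the difference
  of the two sides telescopes termwise. Iterating the equation towards x = 0, where F tends to
  a_0 = 1, evaluates F(x) as an infinite product. S_F3 is the first sum at p = q^2, x = q.
  For S_G4 and S_AG4 the splitting
  (1 + z) (z;p)_n (1/z;p)_n = z (z;p)_n (p/z;p)_n + (1/z;p)_n (pz;p)_n  (and its variant with an
  extra factor p^n) reduces the sum to two instances of the second sum at p = q^2, x = -q.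
\<close>

lemma qpoch_0 [simp]: "qpoch x p 0 = 1"
  by (simp add: qpoch_def)

lemma qpoch_Suc: "qpoch x p (Suc n) = qpoch x p n * (1 - x * p ^ n)"
  by (simp add: qpoch_def)

lemma qpoch_shift: "qpoch (x * p) p n * (1 - x) = qpoch x p n * (1 - x * p ^ n)"
proof (induction n)
  case (Suc n)
  have "qpoch (x * p) p (Suc n) * (1 - x) = qpoch (x * p) p n * (1 - x) * (1 - x * p ^ Suc n)"
    by (simp add: qpoch_Suc mult_ac)
  also have "\<dots> = qpoch x p (Suc n) * (1 - x * p ^ Suc n)"
    by (simp add: Suc qpoch_Suc)
  finally show ?case .
qed simp

lemma qpoch_one_Suc: "qpoch 1 p (Suc n) = 0"
  by (induction n) (simp_all add: qpoch_Suc)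

lemma norm_mult_power_less_one:
  fixes x p :: complex
  assumes "norm x < 1" "norm p \<le> 1"
  shows "norm (x * p ^ j) < 1"
proof -
  have "norm x * norm p ^ j \<le> norm x"
    using assms(2) by (simp add: mult_left_le power_le_one)
  then show ?thesis
    using assms(1) by (simp add: norm_mult norm_power)
qed

lemma one_minus_mult_power_neq_0:
  fixes x p :: complex
  assumes "norm x < 1" "norm p \<le> 1"
  shows "1 - x * p ^ j \<noteq> 0"
  using norm_mult_power_less_one[OF assms, of j] by auto

lemma qpoch_neq_0:
  fixes x p :: complex
  assumes "norm x < 1" "norm p \<le> 1"
  shows "qpoch x p n \<noteq> 0"
  using one_minus_mult_power_neq_0[OF assms] by (simp add: qpoch_def)

lemma convergent_prod_qpoch:
  fixes x p :: complex
  assumes "norm p < 1"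
  shows "convergent_prod (\<lambda>j. 1 - x * p ^ j)"
proof -
  have "summable (\<lambda>j. norm x * norm p ^ j)"
    using assms by (intro summable_mult summable_geometric) auto
  then have "summable (\<lambda>j. norm ((1 - x * p ^ j) - 1))"
    by (simp add: norm_mult norm_power)
  then show ?thesis
    by (intro abs_convergent_prod_imp_convergent_prod summable_imp_abs_convergent_prod)
qed

lemma qpoch_LIMSEQ:
  assumes "norm p < 1"
  shows "(\<lambda>n. qpoch x p n) \<longlonglongrightarrow> qpoch_inf x p"
proof -
  have "(\<lambda>n. qpoch x p (Suc n)) \<longlonglongrightarrow> qpoch_inf x p"
    using convergent_prod_LIMSEQ[OF convergent_prod_qpoch[OF assms]]
    by (simp add: qpoch_def qpoch_inf_def lessThan_Suc_atMost)
  then show ?thesis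
    by (rule LIMSEQ_imp_Suc)
qed

lemma qpoch_LIMSEQ_double:
  assumes "norm p < 1"
  shows "(\<lambda>n. qpoch x p (2 * n)) \<longlonglongrightarrow> qpoch_inf x p"
proof -
  have "strict_mono (\<lambda>n::nat. 2 * n)"
    by (auto simp: strict_mono_def)
  from LIMSEQ_subseq_LIMSEQ[OF qpoch_LIMSEQ[OF assms] this] show ?thesis
    by (simp add: o_def)
qed

lemma qpoch_inf_neq_0:
  fixes x p :: complex
  assumes "norm x < 1" "norm p < 1"
  shows "qpoch_inf x p \<noteq> 0"
  unfolding qpoch_inf_def
  using assms one_minus_mult_power_neq_0[of x p]
  by (intro prodinf_nonzero convergent_prod_qpoch) auto

lemma qpoch_double:
  "qpoch x p (2 * n) = (\<Prod>k<n. (1 - x * p ^ (2 * k)) * (1 - x * p ^ (2 * k + 1)))"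
  by (induction n) (simp_all add: qpoch_Suc)

lemma qpoch_double_base: "qpoch x x (2 * n) = qpoch x (x\<^sup>2) n * qpoch (x\<^sup>2) (x\<^sup>2) n"
proof -
  have "(1 - x * x ^ (2 * k)) * (1 - x * x ^ (2 * k + 1)) = (1 - x * (x\<^sup>2) ^ k) * (1 - x\<^sup>2 * (x\<^sup>2) ^ k)"
    for k :: nat
    unfolding power_mult[symmetric] by (simp add: power2_eq_square)
  then show ?thesis
    unfolding qpoch_double by (simp add: qpoch_def prod.distrib)
qed

lemma qpoch_uminus_mult: "qpoch (- x) p n * qpoch x p n = qpoch (x\<^sup>2) (p\<^sup>2) n"
  by (induction n) (simp_all add: qpoch_Suc algebra_simps power2_eq_square power_mult_distrib)

lemma qpoch_inf_double_base:
  assumes "norm x < 1"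
  shows "qpoch_inf x x = qpoch_inf x (x\<^sup>2) * qpoch_inf (x\<^sup>2) (x\<^sup>2)"
proof -
  have x2: "norm (x\<^sup>2) < 1"
    using assms by (simp add: norm_power power_less_one_iff)
  have "(\<lambda>n. qpoch x x (2 * n)) \<longlonglongrightarrow> qpoch_inf x (x\<^sup>2) * qpoch_inf (x\<^sup>2) (x\<^sup>2)"
    unfolding qpoch_double_base by (intro tendsto_mult qpoch_LIMSEQ x2)
  with qpoch_LIMSEQ_double[OF assms] show ?thesis
    by (rule LIMSEQ_unique)
qed

lemma qpoch_inf_uminus_mult:
  assumes "norm p < 1"
  shows "qpoch_inf (- x) p * qpoch_inf x p = qpoch_inf (x\<^sup>2) (p\<^sup>2)"
proof -
  have p2: "norm (p\<^sup>2) < 1"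
    using assms by (simp add: norm_power power_less_one_iff)
  have "(\<lambda>n. qpoch (- x) p n * qpoch x p n) \<longlonglongrightarrow> qpoch_inf (- x) p * qpoch_inf x p"
    by (intro tendsto_mult qpoch_LIMSEQ assms)
  moreover have "(\<lambda>n. qpoch (- x) p n * qpoch x p n) \<longlonglongrightarrow> qpoch_inf (x\<^sup>2) (p\<^sup>2)"
    unfolding qpoch_uminus_mult by (intro qpoch_LIMSEQ p2)
  ultimately show ?thesis
    by (rule LIMSEQ_unique)
qed

text \<open>Both identities follow from the two shifts of (z;p)_n and (1/z;p)_n after multiplication
  by z - 1; for z = 1 both sides vanish unless n = 0.\<close>
lemma qpoch_inverse_pair_split:
  assumes z: "z \<noteq> 0"
  shows "(1 + z) * (qpoch z p n * qpoch (inverse z) p n)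
           = z * (qpoch z p n * qpoch (p / z) p n) + qpoch (inverse z) p n * qpoch (p * z) p n"
    and "(1 + z) * p ^ n * (qpoch z p n * qpoch (inverse z) p n)
           = qpoch z p n * qpoch (p / z) p n + z * (qpoch (inverse z) p n * qpoch (p * z) p n)"
proof -
  have ident: "(z - 1) * ((1 + z) * (A * B) - (z * (A * P) + B * Q)) = 0"
    "(z - 1) * ((1 + z) * X * (A * B) - (A * P + z * (B * Q))) = 0"
    if "P * (1 - iz) = B * (1 - iz * X)" "Q * (1 - z) = A * (1 - z * X)" "z * iz = 1"
    for A B P Q X iz :: complex
    using that by algebra+
  have shifts: "qpoch (p / z) p n * (1 - inverse z) = qpoch (inverse z) p n * (1 - inverse z * p ^ n)"
    "qpoch (p * z) p n * (1 - z) = qpoch z p n * (1 - z * p ^ n)"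
    using qpoch_shift[of "inverse z" p n] qpoch_shift[of z p n] by (simp_all add: field_simps mult.commute)
  show "(1 + z) * (qpoch z p n * qpoch (inverse z) p n)
           = z * (qpoch z p n * qpoch (p / z) p n) + qpoch (inverse z) p n * qpoch (p * z) p n"
    and "(1 + z) * p ^ n * (qpoch z p n * qpoch (inverse z) p n)
           = qpoch z p n * qpoch (p / z) p n + z * (qpoch (inverse z) p n * qpoch (p * z) p n)"
    using ident[OF shifts] z by (cases "z = 1"; cases n; simp add: qpoch_one_Suc)+
qed

section \<open>Series of the form sum_n a_n x^n / (x;p)_n\<close>

definition qseries_term :: "(nat \<Rightarrow> complex) \<Rightarrow> complex \<Rightarrow> complex \<Rightarrow> nat \<Rightarrow> complex" where
  "qseries_term a p x n = a n * x ^ n / qpoch x p n"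

definition qseries :: "(nat \<Rightarrow> complex) \<Rightarrow> complex \<Rightarrow> complex \<Rightarrow> complex" where
  "qseries a p x = suminf (qseries_term a p x)"

lemma qseries_term_0 [simp]: "qseries_term a p x 0 = a 0"
  by (simp add: qseries_term_def)

definition qpoch_lower_bound :: "complex \<Rightarrow> real \<Rightarrow> nat \<Rightarrow> real" where
  "qpoch_lower_bound p r n = (\<Prod>j<n. 1 - r * norm p ^ j)"

definition qseries_majorant :: "(nat \<Rightarrow> complex) \<Rightarrow> complex \<Rightarrow> real \<Rightarrow> nat \<Rightarrow> real" where
  "qseries_majorant a p r n = norm (a n) * r ^ n / qpoch_lower_bound p r n"

lemma mult_power_less_one:
  fixes r s :: real
  assumes "0 \<le> r" "r < 1" "0 \<le> s" "s \<le> 1"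
  shows "r * s ^ j < 1"
  using assms mult_left_le[of "s ^ j" r] power_le_one[of s j] by linarith

lemma qpoch_lower_bound_pos:
  assumes "norm p \<le> 1" "0 \<le> r" "r < 1"
  shows "qpoch_lower_bound p r n > 0"
  unfolding qpoch_lower_bound_def
  using assms mult_power_less_one[of r "norm p"] by (intro prod_pos) auto

lemma qpoch_lower_bound_le:
  assumes "norm p \<le> 1" "norm x \<le> r" "r < 1"
  shows "qpoch_lower_bound p r n \<le> norm (qpoch x p n)"
proof -
  have "0 \<le> 1 - r * norm p ^ j \<and> 1 - r * norm p ^ j \<le> norm (1 - x * p ^ j)" for j
  proof -
    have "norm x * norm p ^ j \<le> r * norm p ^ j"
      using assms by (simp add: mult_right_mono)
    moreover have "1 - norm (x * p ^ j) \<le> norm (1 - x * p ^ j)"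
      by (metis norm_one norm_triangle_ineq2)
    ultimately show ?thesis
      using assms mult_power_less_one[of r "norm p" j] norm_ge_zero[of x]
      by (simp add: norm_mult norm_power)
  qed
  then have "qpoch_lower_bound p r n \<le> (\<Prod>j<n. norm (1 - x * p ^ j))"
    unfolding qpoch_lower_bound_def by (intro prod_mono) auto
  also have "\<dots> = norm (qpoch x p n)"
    by (simp add: qpoch_def prod_norm)
  finally show ?thesis .
qed

lemma norm_qseries_term_le:
  assumes "norm p \<le> 1" "norm x \<le> r" "r < 1"
  shows "norm (qseries_term a p x n) \<le> norm (a n) * norm x ^ n / qpoch_lower_bound p r n"
proof -
  have "0 \<le> r"
    using assms(2) norm_ge_zero[of x] by linarith
  with assms have "0 < qpoch_lower_bound p r n"
    by (intro qpoch_lower_bound_pos) auto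
  with qpoch_lower_bound_le[OF assms] show ?thesis
    unfolding qseries_term_def norm_divide norm_mult norm_power
    by (intro frac_le) auto
qed

text \<open>The coefficients are given through a recurrence with convergent ratios rather than by
  their quotients because they may vanish; the ratio test is applied to the majorant.\<close>
locale qseries_ratio =
  fixes a :: "nat \<Rightarrow> complex" and p :: complex and \<beta> :: "nat \<Rightarrow> complex" and \<beta>0 :: complex
  assumes norm_p: "norm p < 1"
    and a_Suc: "\<And>n. a (Suc n) = a n * \<beta> n"
    and \<beta>_lim: "\<beta> \<longlonglongrightarrow> \<beta>0"
    and norm_\<beta>0: "norm \<beta>0 \<le> 1"
begin

lemma summable_majorant:
  assumes r: "0 \<le> r" "r < 1"
  shows "summable (qseries_majorant a p r)"
proof -
  define \<rho> where "\<rho> n = norm (\<beta> n) * r / (1 - r * norm p ^ n)" for n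
  define s where "s = norm \<beta>0 * r"
  define \<theta> where "\<theta> = (1 + s) / 2"
  have s: "s < 1"
    unfolding s_def using r norm_\<beta>0 mult_right_mono[of "norm \<beta>0" 1 r] by linarith
  have "(\<lambda>n. norm p ^ n) \<longlonglongrightarrow> 0"
    using LIMSEQ_realpow_zero[of "norm p"] norm_p by simp
  then have "\<rho> \<longlonglongrightarrow> s / (1 - r * 0)"
    unfolding \<rho>_def s_def by (intro tendsto_intros \<beta>_lim) (use norm_p in auto)
  moreover have "s < \<theta>"
    unfolding \<theta>_def using s by simp
  ultimately have "eventually (\<lambda>n. \<rho> n < \<theta>) sequentially"
    by (intro order_tendstoD) auto
  then obtain N where N: "\<And>n. n \<ge> N \<Longrightarrow> \<rho> n < \<theta>"
    by (auto simp: eventually_sequentially)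
  show ?thesis
  proof (rule summable_ratio_test)
    show "\<theta> < 1"
      unfolding \<theta>_def using s by simp
    fix n assume "n \<ge> N"
    have pos: "qpoch_lower_bound p r m > 0" for m
      using norm_p r by (intro qpoch_lower_bound_pos) auto
    have nonneg: "qseries_majorant a p r m \<ge> 0" for m
      unfolding qseries_majorant_def using pos[of m] r by simp
    have "1 - r * norm p ^ n \<noteq> 0"
      using mult_power_less_one[of r "norm p" n] norm_p r by simp
    then have "qseries_majorant a p r (Suc n) = qseries_majorant a p r n * \<rho> n"
      unfolding qseries_majorant_def \<rho>_def qpoch_lower_bound_def
      by (simp add: a_Suc norm_mult field_simps)
    also have "\<dots> \<le> qseries_majorant a p r n * \<theta>"
      using N[OF \<open>n \<ge> N\<close>] nonneg[of n] by (intro mult_left_mono) auto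
    finally show "norm (qseries_majorant a p r (Suc n)) \<le> \<theta> * norm (qseries_majorant a p r n)"
      using nonneg[of n] nonneg[of "Suc n"] by (simp add: mult.commute)
  qed
qed

lemma norm_qseries_term_le_majorant:
  assumes "norm x \<le> r" "r < 1"
  shows "norm (qseries_term a p x n) \<le> qseries_majorant a p r n"
proof -
  have "norm (qseries_term a p x n) \<le> norm (a n) * norm x ^ n / qpoch_lower_bound p r n"
    using norm_p assms by (intro norm_qseries_term_le) auto
  also have "\<dots> \<le> qseries_majorant a p r n"
    unfolding qseries_majorant_def
    using qpoch_lower_bound_pos[of p r n] norm_p assms norm_ge_zero[of x]
    by (intro divide_right_mono mult_left_mono power_mono) auto
  finally show ?thesis .
qed

lemma summable_qseries_term:
  assumes "norm x < 1"
  shows "summable (qseries_term a p x)"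
  using assms
  by (intro summable_comparison_test'[OF summable_majorant norm_qseries_term_le_majorant]) auto

lemma norm_qseries_minus_a0_le:
  assumes r: "0 < r" "r < 1" and x: "norm x \<le> r"
  shows "norm (qseries a p x - a 0) \<le> norm x / r * (\<Sum>n. qseries_majorant a p r (Suc n))"
proof -
  have maj: "summable (\<lambda>n. qseries_majorant a p r (Suc n))"
    using summable_majorant r by (simp add: summable_Suc_iff)
  have bound: "norm (qseries_term a p x (Suc n)) \<le> norm x / r * qseries_majorant a p r (Suc n)"
    for n
  proof -
    have "norm x ^ Suc n \<le> norm x * r ^ n"
      using x by (simp add: mult_left_mono power_mono)
    then have "norm (a (Suc n)) * norm x ^ Suc n / qpoch_lower_bound p r (Suc n)
        \<le> norm (a (Suc n)) * (norm x * r ^ n) / qpoch_lower_bound p r (Suc n)"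
      using qpoch_lower_bound_pos[of p r "Suc n"] norm_p r
      by (intro divide_right_mono mult_left_mono) auto
    also have "\<dots> = norm x / r * qseries_majorant a p r (Suc n)"
      unfolding qseries_majorant_def using r by (simp add: field_simps)
    finally show ?thesis
      using norm_qseries_term_le[of p x r a "Suc n"] norm_p x r by simp
  qed
  have summable_norm_tail: "summable (\<lambda>n. norm (qseries_term a p x (Suc n)))"
    by (rule summable_comparison_test'[OF summable_mult[OF maj, of "norm x / r"]]) (use bound in simp)
  have "qseries a p x - a 0 = (\<Sum>n. qseries_term a p x (Suc n))"
    using suminf_split_head[OF summable_qseries_term] x r
    by (simp add: qseries_def)
  also have "norm \<dots> \<le> (\<Sum>n. norm (qseries_term a p x (Suc n)))"
    by (rule summable_norm[OF summable_norm_tail])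
  also have "\<dots> \<le> (\<Sum>n. norm x / r * qseries_majorant a p r (Suc n))"
    by (intro suminf_le summable_norm_tail summable_mult maj bound)
  also have "\<dots> = norm x / r * (\<Sum>n. qseries_majorant a p r (Suc n))"
    by (intro suminf_mult maj)
  finally show ?thesis .
qed

lemma qseries_tendsto_a0:
  assumes "x \<longlonglongrightarrow> 0"
  shows "(\<lambda>n. qseries a p (x n)) \<longlonglongrightarrow> a 0"
proof -
  define M where "M = (\<Sum>n. qseries_majorant a p (1/2) (Suc n))"
  have "eventually (\<lambda>n. norm (x n) < 1/2) sequentially"
    using tendstoD[OF assms, of "1/2"] by simp
  then have "eventually (\<lambda>n. norm (qseries a p (x n) - a 0) \<le> norm (x n) / (1/2) * M) sequentially"
    unfolding M_def by eventually_elim (intro norm_qseries_minus_a0_le, auto)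
  moreover have "(\<lambda>n. norm (x n) / (1/2) * M) \<longlonglongrightarrow> 0"
    by (intro tendsto_mult_left_zero tendsto_divide_zero tendsto_norm_zero assms)
  ultimately have "(\<lambda>n. qseries a p (x n) - a 0) \<longlonglongrightarrow> 0"
    by (rule Lim_null_comparison)
  then show ?thesis
    by (simp add: LIM_zero_iff)
qed

end

section \<open>Evaluation through a q-difference equation\<close>

lemma telescoping_suminf_eq:
  fixes t u G :: "nat \<Rightarrow> 'a::real_normed_field"
  assumes "summable t" "summable u"
    and telescope: "\<And>n. \<alpha> * t n - \<beta> * u n = G n - G (Suc n)"
    and "G \<longlonglongrightarrow> 0" "G 0 = 0"
  shows "\<alpha> * suminf t = \<beta> * suminf u"
proof -
  have "(\<lambda>n. \<alpha> * t n - \<beta> * u n) sums 0"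
    unfolding telescope using telescope_sums'[OF assms(4)] assms(5) by simp
  moreover have "(\<lambda>n. \<alpha> * t n - \<beta> * u n) sums (\<alpha> * suminf t - \<beta> * suminf u)"
    by (intro sums_diff sums_mult summable_sums assms(1,2))
  ultimately show ?thesis
    using sums_unique2 by fastforce
qed

lemma functional_equation_limit:
  fixes F R :: "complex \<Rightarrow> complex"
  assumes \<rho>: "norm \<rho> \<le> 1"
    and feq: "\<And>y. norm y \<le> norm c \<Longrightarrow> F y = R y * F (\<rho> * y)"
    and prod_lim: "(\<lambda>K. \<Prod>k<K. R (\<rho> ^ k * c)) \<longlonglongrightarrow> L"
    and F_lim: "(\<lambda>K. F (\<rho> ^ K * c)) \<longlonglongrightarrow> 1"
  shows "F c = L"
proof -
  have iterate: "F c = (\<Prod>k<K. R (\<rho> ^ k * c)) * F (\<rho> ^ K * c)" for K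
  proof (induction K)
    case (Suc K)
    have "norm (\<rho> ^ K * c) \<le> norm c"
      using \<rho> by (simp add: norm_mult norm_power mult_left_le_one_le power_le_one)
    with Suc show ?case
      using feq[of "\<rho> ^ K * c"] by (simp add: mult_ac)
  qed simp
  have "(\<lambda>K. (\<Prod>k<K. R (\<rho> ^ k * c)) * F (\<rho> ^ K * c)) \<longlonglongrightarrow> L * 1"
    by (intro tendsto_mult prod_lim F_lim)
  then show ?thesis
    unfolding iterate[symmetric] by (simp add: LIMSEQ_const_iff)
qed

lemma qseries_term_Suc:
  fixes y p :: complex
  assumes "norm y < 1" "norm p \<le> 1" "a (Suc n) = a n * b"
  shows "(1 - y * p ^ n) * qseries_term a p y (Suc n) = b * y * qseries_term a p y n"
  using assms one_minus_mult_power_neq_0[OF assms(1,2), of n] qpoch_neq_0[OF assms(1,2), of n]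
  by (simp add: qseries_term_def qpoch_Suc field_simps)

lemma qseries_term_shift:
  fixes y p :: complex
  assumes y: "norm y < 1" and p: "norm p \<le> 1"
  shows "(1 - y * p ^ n) * qseries_term a p (p * y) n = (1 - y) * p ^ n * qseries_term a p y n"
proof -
  have "norm (p * y) < 1"
    using norm_mult_power_less_one[OF y p, of 1] by (simp add: mult.commute)
  then have "qpoch (p * y) p n \<noteq> 0" "qpoch y p n \<noteq> 0"
    using y p by (simp_all add: qpoch_neq_0)
  then have ratio: "(1 - y * p ^ n) / qpoch (p * y) p n = (1 - y) / qpoch y p n"
    using qpoch_shift[of y p n] by (simp add: field_simps mult.commute)
  have "(1 - y * p ^ n) * qseries_term a p (p * y) n
      = a n * p ^ n * y ^ n * ((1 - y * p ^ n) / qpoch (p * y) p n)"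
    by (simp add: qseries_term_def power_mult_distrib)
  also have "\<dots> = (1 - y) * p ^ n * qseries_term a p y n"
    unfolding ratio by (simp add: qseries_term_def)
  finally show ?thesis .
qed

lemma suminf_skip_zero:
  fixes t :: "nat \<Rightarrow> 'a::real_normed_vector"
  assumes "summable t"
  shows "(\<Sum>n. if n = 0 then 0 else t n) = suminf t - t 0"
proof -
  have "summable (\<lambda>n. if n = 0 then 0 else t n)"
    using assms by (subst summable_Suc_iff[symmetric]) (simp add: summable_Suc_iff)
  from suminf_split_head[OF this] suminf_split_head[OF assms] show ?thesis
    by simp
qed

section \<open>A special q-Gauss sum\<close>

definition gauss_coeff :: "complex \<Rightarrow> complex \<Rightarrow> nat \<Rightarrow> complex" where
  "gauss_coeff z p n = qpoch z p n * qpoch (inverse z) p n / qpoch p p n"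

lemma gauss_coeff_0 [simp]: "gauss_coeff z p 0 = 1"
  by (simp add: gauss_coeff_def)

lemma gauss_coeff_Suc:
  "gauss_coeff z p (Suc n)
     = gauss_coeff z p n * ((1 - z * p ^ n) * (1 - inverse z * p ^ n) / (1 - p * p ^ n))"
  by (simp add: gauss_coeff_def qpoch_Suc mult_ac)

lemma qseries_ratio_gauss_coeff:
  assumes "norm p < 1"
  shows "qseries_ratio (gauss_coeff z p) p
           (\<lambda>n. (1 - z * p ^ n) * (1 - inverse z * p ^ n) / (1 - p * p ^ n)) 1"
proof
  have "(\<lambda>n. (1 - z * p ^ n) * (1 - inverse z * p ^ n) / (1 - p * p ^ n))
      \<longlonglongrightarrow> (1 - z * 0) * (1 - inverse z * 0) / (1 - p * 0)"
    by (intro tendsto_intros LIMSEQ_power_zero assms) simp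
  then show "(\<lambda>n. (1 - z * p ^ n) * (1 - inverse z * p ^ n) / (1 - p * p ^ n)) \<longlonglongrightarrow> 1"
    by simp
qed (use assms gauss_coeff_Suc in auto)

lemma gauss_term_telescopes:
  assumes p: "norm p < 1" and z: "z \<noteq> 0" and y: "norm y < 1"
  shows "(1 - y)\<^sup>2 * qseries_term (gauss_coeff z p) p y n
           - (1 - y * z) * (1 - y * inverse z) * qseries_term (gauss_coeff z p) p (p * y) n
         = (1 - y) * (1 - p ^ n) * qseries_term (gauss_coeff z p) p y n
           - (1 - y) * (1 - p ^ Suc n) * qseries_term (gauss_coeff z p) p y (Suc n)"
proof -
  define t where "t = qseries_term (gauss_coeff z p) p y"
  define X where "X = p ^ n"
  define \<beta> where "\<beta> = (1 - z * X) * (1 - inverse z * X) / (1 - p * X)"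
  have p1: "norm p \<le> 1"
    using p by simp
  have yX: "1 - y * X \<noteq> 0" and pX: "1 - p * X \<noteq> 0"
    unfolding X_def using one_minus_mult_power_neq_0 y p p1 by auto
  have \<beta>: "\<beta> * (1 - p * X) = (1 - z * X) * (1 - inverse z * X)"
    unfolding \<beta>_def using pX by simp
  have t_Suc: "(1 - y * X) * t (Suc n) = \<beta> * y * t n"
    unfolding t_def \<beta>_def X_def using y p1 gauss_coeff_Suc by (rule qseries_term_Suc)
  have u: "(1 - y * X) * qseries_term (gauss_coeff z p) p (p * y) n = (1 - y) * X * t n"
    unfolding t_def X_def using y p1 by (rule qseries_term_shift)
  have ident: "(1 - y * X) * ((1 - y)\<^sup>2 * t0 - (1 - y * z) * (1 - y * iz) * u0
      - ((1 - y) * (1 - X) * t0 - (1 - y) * (1 - p * X) * t1)) = 0"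
    if "\<beta> * (1 - p * X) = (1 - z * X) * (1 - iz * X)" "(1 - y * X) * t1 = \<beta> * y * t0"
      "(1 - y * X) * u0 = (1 - y) * X * t0" "z * iz = 1"
    for iz t0 t1 u0 :: complex
    using that by algebra
  have "z * inverse z = 1"
    using z by simp
  from ident[OF \<beta> t_Suc u this] yX show ?thesis
    by (simp add: t_def X_def)
qed

lemma gauss_functional_equation:
  assumes p: "norm p < 1" and z: "z \<noteq> 0" and y: "norm y < 1"
  shows "(1 - y)\<^sup>2 * qseries (gauss_coeff z p) p y
           = (1 - y * z) * (1 - y * inverse z) * qseries (gauss_coeff z p) p (p * y)"
proof -
  interpret qseries_ratio "gauss_coeff z p" p
      "\<lambda>n. (1 - z * p ^ n) * (1 - inverse z * p ^ n) / (1 - p * p ^ n)" 1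
    by (rule qseries_ratio_gauss_coeff[OF p])
  have py: "norm (p * y) < 1"
    using norm_mult_power_less_one[OF y, of p 1] p by (simp add: mult.commute)
  define t where "t = qseries_term (gauss_coeff z p) p y"
  define G where "G n = (1 - y) * (1 - p ^ n) * t n" for n
  have "t \<longlonglongrightarrow> 0"
    unfolding t_def using summable_qseries_term[OF y] by (rule summable_LIMSEQ_zero)
  then have "G \<longlonglongrightarrow> (1 - y) * (1 - 0) * 0"
    unfolding G_def by (intro tendsto_intros LIMSEQ_power_zero p)
  moreover have "G 0 = 0"
    by (simp add: G_def)
  ultimately show ?thesis
    using telescoping_suminf_eq[OF summable_qseries_term[OF y, folded t_def] summable_qseries_term[OF py],
        OF gauss_term_telescopes[OF p z y, folded t_def, folded G_def]]
    by (simp add: qseries_def t_def)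
qed

lemma gauss_sum:
  assumes p: "norm p < 1" and c: "norm c < 1" and z: "z \<noteq> 0"
  shows "qseries (gauss_coeff z p) p c
           = qpoch_inf (c * z) p * qpoch_inf (c * inverse z) p / (qpoch_inf c p)\<^sup>2"
proof -
  interpret qseries_ratio "gauss_coeff z p" p
      "\<lambda>n. (1 - z * p ^ n) * (1 - inverse z * p ^ n) / (1 - p * p ^ n)" 1
    by (rule qseries_ratio_gauss_coeff[OF p])
  define R where "R y = (1 - y * z) * (1 - y * inverse z) / (1 - y)\<^sup>2" for y
  have feq: "qseries (gauss_coeff z p) p y = R y * qseries (gauss_coeff z p) p (p * y)"
    if "norm y \<le> norm c" for y
  proof -
    have y: "norm y < 1"
      using that c by simp
    then have "(1 - y)\<^sup>2 \<noteq> 0"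
      by auto
    then show ?thesis
      unfolding R_def times_divide_eq_left gauss_functional_equation[OF p z y, symmetric]
      by simp
  qed
  have "(\<Prod>k<K. R (p ^ k * c)) = qpoch (c * z) p K * qpoch (c * inverse z) p K / (qpoch c p K)\<^sup>2"
    for K
    by (simp add: R_def qpoch_def prod_dividef prod.distrib prod_power_distrib mult_ac)
  moreover have "qpoch_inf c p \<noteq> 0"
    using c p by (rule qpoch_inf_neq_0)
  ultimately have prod_lim: "(\<lambda>K. \<Prod>k<K. R (p ^ k * c))
      \<longlonglongrightarrow> qpoch_inf (c * z) p * qpoch_inf (c * inverse z) p / (qpoch_inf c p)\<^sup>2"
    by (simp only:) (intro tendsto_intros qpoch_LIMSEQ p, simp)
  have "(\<lambda>K. p ^ K * c) \<longlonglongrightarrow> 0 * c"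
    by (intro tendsto_intros LIMSEQ_power_zero p)
  then have "(\<lambda>K. qseries (gauss_coeff z p) p (p ^ K * c)) \<longlonglongrightarrow> 1"
    using qseries_tendsto_a0[of "\<lambda>K. p ^ K * c"] by simp
  from functional_equation_limit[OF _ feq prod_lim this] p show ?thesis
    by simp
qed

section \<open>A Bailey-type sum\<close>

definition bailey_coeff :: "complex \<Rightarrow> complex \<Rightarrow> nat \<Rightarrow> complex" where
  "bailey_coeff b p n = qpoch b p n * qpoch (p / b) p n * p ^ (n choose 2) / qpoch (p\<^sup>2) (p\<^sup>2) n"

lemma bailey_coeff_0 [simp]: "bailey_coeff b p 0 = 1"
  by (simp add: bailey_coeff_def numeral_2_eq_2)

lemma choose_two_Suc: "Suc n choose 2 = (n choose 2) + n"
  by (simp add: numeral_2_eq_2)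

lemma bailey_coeff_Suc:
  "bailey_coeff b p (Suc n)
     = bailey_coeff b p n * ((1 - b * p ^ n) * (1 - p / b * p ^ n) * p ^ n / (1 - p\<^sup>2 * (p\<^sup>2) ^ n))"
  by (simp add: bailey_coeff_def qpoch_Suc choose_two_Suc power_add mult_ac)

lemma qseries_ratio_bailey_coeff:
  assumes "norm p < 1"
  shows "qseries_ratio (bailey_coeff b p) p
           (\<lambda>n. (1 - b * p ^ n) * (1 - p / b * p ^ n) * p ^ n / (1 - p\<^sup>2 * (p\<^sup>2) ^ n)) 0"
proof
  have "norm (p\<^sup>2) < 1"
    using assms by (simp add: norm_power power_less_one_iff)
  then have "(\<lambda>n. (1 - b * p ^ n) * (1 - p / b * p ^ n) * p ^ n / (1 - p\<^sup>2 * (p\<^sup>2) ^ n))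
      \<longlonglongrightarrow> (1 - b * 0) * (1 - p / b * 0) * 0 / (1 - p\<^sup>2 * 0)"
    by (intro tendsto_intros LIMSEQ_power_zero assms) simp_all
  then show "(\<lambda>n. (1 - b * p ^ n) * (1 - p / b * p ^ n) * p ^ n / (1 - p\<^sup>2 * (p\<^sup>2) ^ n))
      \<longlonglongrightarrow> 0"
    by simp
qed (use assms bailey_coeff_Suc in auto)

lemma bailey_telescoping_identity:
  fixes b ib p y X \<beta> t0 t1 u0 v0 g0 g1 :: complex
  assumes "b * ib = 1" and yX: "1 - y * X \<noteq> 0" and pyX: "1 - p * y * X \<noteq> 0"
    and "\<beta> * (1 - p\<^sup>2 * X\<^sup>2) = (1 - b * X) * (1 - p * ib * X) * X"
    and "(1 - y * X) * t1 = \<beta> * y * t0"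
    and "(1 - y * X) * v0 = (1 - y) * X * t0" "(1 - p * y * X) * u0 = (1 - p * y) * X * v0"
    and "g0 * (1 - y * X) = (1 - X\<^sup>2) * t0" "g1 * (1 - p * y * X) = (1 - p\<^sup>2 * X\<^sup>2) * t1"
  shows "(1 - y) * (1 - y * p) * t0 - (1 - y * p * ib) * (1 - b * y) * u0
           = (1 - y) * (1 - y * p) * g0 - (1 - y) * (1 - y * p) * g1"
proof -
  have u0: "(1 - y * X) * (1 - p * y * X) * u0 = (1 - p * y) * (1 - y) * X\<^sup>2 * t0"
    using assms(6,7) by algebra
  have t1: "(1 - p\<^sup>2 * X\<^sup>2) * (1 - y * X) * t1 = (1 - b * X) * (1 - p * ib * X) * X * y * t0"
    using assms(4,5) by algebra
  have poly: "(1 - y * X) * (1 - p * y * X) - (1 - y * p * ib) * (1 - b * y) * X\<^sup>2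
      = (1 - p * y * X) * (1 - X\<^sup>2) - (1 - b * X) * (1 - p * ib * X) * X * y"
    using assms(1) by algebra
  have "(1 - y * X) * (1 - p * y * X)
           * ((1 - y) * (1 - y * p) * t0 - (1 - y * p * ib) * (1 - b * y) * u0)
      = (1 - y) * (1 - y * p) * (1 - y * X) * (1 - p * y * X) * t0
        - (1 - y * p * ib) * (1 - b * y) * ((1 - y * X) * (1 - p * y * X) * u0)"
    by algebra
  also have "\<dots> = (1 - y) * (1 - y * p) * t0
      * ((1 - y * X) * (1 - p * y * X) - (1 - y * p * ib) * (1 - b * y) * X\<^sup>2)"
    unfolding u0 by algebra
  also have "\<dots> = (1 - y) * (1 - y * p)
      * ((1 - X\<^sup>2) * (1 - p * y * X) * t0 - (1 - b * X) * (1 - p * ib * X) * X * y * t0)"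
    unfolding poly by algebra
  also have "\<dots> = (1 - y * X) * (1 - p * y * X)
      * ((1 - y) * (1 - y * p) * g0 - (1 - y) * (1 - y * p) * g1)"
    unfolding t1[symmetric] using assms(8,9) by algebra
  finally show ?thesis
    using yX pyX by simp
qed

lemma bailey_term_telescopes:
  assumes p: "norm p < 1" and b: "b \<noteq> 0" and y: "norm y < 1"
  shows "(1 - y) * (1 - y * p) * qseries_term (bailey_coeff b p) p y n
           - (1 - y * p / b) * (1 - b * y) * qseries_term (bailey_coeff b p) p (p\<^sup>2 * y) n
         = (1 - y) * (1 - y * p) * ((1 - (p ^ n)\<^sup>2) * qseries_term (bailey_coeff b p) p y n
               / (1 - y * p ^ n))
           - (1 - y) * (1 - y * p) * ((1 - (p ^ Suc n)\<^sup>2) * qseries_term (bailey_coeff b p) p y (Suc n)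
               / (1 - y * p ^ Suc n))"
proof -
  define t where "t = qseries_term (bailey_coeff b p) p y"
  define v where "v = qseries_term (bailey_coeff b p) p (p * y)"
  define X where "X = p ^ n"
  define \<beta> where "\<beta> = (1 - b * X) * (1 - p / b * X) * X / (1 - p\<^sup>2 * (p\<^sup>2) ^ n)"
  have p1: "norm p \<le> 1" and p2: "norm (p\<^sup>2) < 1"
    using p by (simp_all add: norm_power power_less_one_iff)
  have py: "norm (p * y) < 1"
    using norm_mult_power_less_one[OF y p1, of 1] by (simp add: mult.commute)
  have p2y: "p\<^sup>2 * y = p * (p * y)"
    by (simp add: power2_eq_square)
  have X2: "(p\<^sup>2) ^ n = X\<^sup>2"
    by (simp add: X_def power_mult[symmetric] power_mult_distrib[symmetric] mult.commute)
  have yX: "1 - y * X \<noteq> 0" and pyX: "1 - p * y * X \<noteq> 0"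
    unfolding X_def using one_minus_mult_power_neq_0 y py p1 by auto
  have "1 - p\<^sup>2 * X\<^sup>2 \<noteq> 0"
    using one_minus_mult_power_neq_0[OF p2, of "p\<^sup>2" n] p2 X2 by simp
  then have \<beta>: "\<beta> * (1 - p\<^sup>2 * X\<^sup>2) = (1 - b * X) * (1 - p * inverse b * X) * X"
    unfolding \<beta>_def X2 by (simp add: divide_inverse)
  have t_Suc: "(1 - y * X) * t (Suc n) = \<beta> * y * t n"
    unfolding t_def \<beta>_def X_def using y p1 bailey_coeff_Suc by (rule qseries_term_Suc)
  have v: "(1 - y * X) * v n = (1 - y) * X * t n"
    unfolding t_def v_def X_def using y p1 by (rule qseries_term_shift)
  have u: "(1 - p * y * X) * qseries_term (bailey_coeff b p) p (p\<^sup>2 * y) n = (1 - p * y) * X * v n"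
    unfolding v_def X_def p2y using py p1 by (rule qseries_term_shift)
  have g0: "(1 - (p ^ n)\<^sup>2) * t n / (1 - y * p ^ n) * (1 - y * X) = (1 - X\<^sup>2) * t n"
    using yX by (simp add: X_def)
  have g1: "(1 - (p ^ Suc n)\<^sup>2) * t (Suc n) / (1 - y * p ^ Suc n) * (1 - p * y * X)
      = (1 - p\<^sup>2 * X\<^sup>2) * t (Suc n)"
    using pyX by (simp add: X_def power_mult_distrib mult_ac)
  have "b * inverse b = 1"
    using b by simp
  from bailey_telescoping_identity[OF this yX pyX \<beta> t_Suc v u g0 g1] show ?thesis
    by (simp add: t_def divide_inverse)
qed

lemma bailey_functional_equation:
  assumes p: "norm p < 1" and b: "b \<noteq> 0" and y: "norm y < 1"
  shows "(1 - y) * (1 - y * p) * qseries (bailey_coeff b p) p y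
           = (1 - y * p / b) * (1 - b * y) * qseries (bailey_coeff b p) p (p\<^sup>2 * y)"
proof -
  interpret qseries_ratio "bailey_coeff b p" p
      "\<lambda>n. (1 - b * p ^ n) * (1 - p / b * p ^ n) * p ^ n / (1 - p\<^sup>2 * (p\<^sup>2) ^ n)" 0
    by (rule qseries_ratio_bailey_coeff[OF p])
  have "norm (p * (p * y)) < 1"
    using norm_mult_power_less_one[OF y, of p 2] p by (simp add: power2_eq_square mult_ac)
  then have p2y: "norm (p\<^sup>2 * y) < 1"
    by (simp add: power2_eq_square mult.assoc)
  define t where "t = qseries_term (bailey_coeff b p) p y"
  define G where "G n = (1 - y) * (1 - y * p) * ((1 - (p ^ n)\<^sup>2) * t n / (1 - y * p ^ n))" for n
  have "t \<longlonglongrightarrow> 0"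
    unfolding t_def using summable_qseries_term[OF y] by (rule summable_LIMSEQ_zero)
  then have "G \<longlonglongrightarrow> (1 - y) * (1 - y * p) * ((1 - 0\<^sup>2) * 0 / (1 - y * 0))"
    unfolding G_def by (intro tendsto_intros LIMSEQ_power_zero p) auto
  moreover have "G 0 = 0"
    by (simp add: G_def)
  ultimately show ?thesis
    using telescoping_suminf_eq[OF summable_qseries_term[OF y, folded t_def] summable_qseries_term[OF p2y],
        OF bailey_term_telescopes[OF p b y, folded t_def, folded G_def]]
    by (simp add: qseries_def t_def)
qed

lemma bailey_sum:
  assumes p: "norm p < 1" and c: "norm c < 1" and b: "b \<noteq> 0"
  shows "qseries (bailey_coeff b p) p c
           = qpoch_inf (c * p / b) (p\<^sup>2) * qpoch_inf (b * c) (p\<^sup>2) / qpoch_inf c p"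
proof -
  interpret qseries_ratio "bailey_coeff b p" p
      "\<lambda>n. (1 - b * p ^ n) * (1 - p / b * p ^ n) * p ^ n / (1 - p\<^sup>2 * (p\<^sup>2) ^ n)" 0
    by (rule qseries_ratio_bailey_coeff[OF p])
  have p2: "norm (p\<^sup>2) < 1"
    using p by (simp add: norm_power power_less_one_iff)
  define R where "R y = (1 - y * p / b) * (1 - b * y) / ((1 - y) * (1 - y * p))" for y
  have feq: "qseries (bailey_coeff b p) p y = R y * qseries (bailey_coeff b p) p (p\<^sup>2 * y)"
    if "norm y \<le> norm c" for y
  proof -
    have y: "norm y < 1"
      using that c by simp
    then have "(1 - y) * (1 - y * p) \<noteq> 0"
      using one_minus_mult_power_neq_0[OF y, of p 1] p by auto
    then show ?thesis
      unfolding R_def times_divide_eq_left bailey_functional_equation[OF p b y, symmetric]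
      by simp
  qed
  have "(\<Prod>k<K. R ((p\<^sup>2) ^ k * c))
      = qpoch (c * p / b) (p\<^sup>2) K * qpoch (b * c) (p\<^sup>2) K / qpoch c p (2 * K)" for K
    unfolding qpoch_double
    by (simp add: R_def qpoch_def prod_dividef prod.distrib power_mult[symmetric] mult_ac)
  moreover have "qpoch_inf c p \<noteq> 0"
    using c p by (rule qpoch_inf_neq_0)
  ultimately have prod_lim: "(\<lambda>K. \<Prod>k<K. R ((p\<^sup>2) ^ k * c))
      \<longlonglongrightarrow> qpoch_inf (c * p / b) (p\<^sup>2) * qpoch_inf (b * c) (p\<^sup>2) / qpoch_inf c p"
    by (simp only:) (intro tendsto_intros qpoch_LIMSEQ qpoch_LIMSEQ_double p p2)
  have "(\<lambda>K. (p\<^sup>2) ^ K * c) \<longlonglongrightarrow> 0 * c"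
    by (intro tendsto_intros LIMSEQ_power_zero p2)
  then have "(\<lambda>K. qseries (bailey_coeff b p) p ((p\<^sup>2) ^ K * c)) \<longlonglongrightarrow> 1"
    using qseries_tendsto_a0[of "\<lambda>K. (p\<^sup>2) ^ K * c"] by simp
  from functional_equation_limit[OF _ feq prod_lim this] p2 show ?thesis
    by simp
qed

lemma S_F3_closed_form:
  fixes z q :: complex
  assumes q: "norm q < 1" and z: "z \<noteq> 0"
    and "qpoch_inf z (q\<^sup>2) \<noteq> 0" "qpoch_inf (inverse z) (q\<^sup>2) \<noteq> 0"
  shows "S_F3 z q =
           qpoch_inf (z*q) (q^2) * qpoch_inf (inverse z * q) (q^2) * qpoch_inf (q^2) (q^2)
             / (qpoch_inf z (q^2) * qpoch_inf (inverse z) (q^2) * qpoch_inf q (q^2))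
         - qpoch_inf q q / (qpoch_inf z (q^2) * qpoch_inf (inverse z) (q^2))"
proof -
  have q2: "norm (q\<^sup>2) < 1"
    using q by (simp add: norm_power power_less_one_iff)
  interpret qseries_ratio "gauss_coeff z (q\<^sup>2)" "q\<^sup>2"
      "\<lambda>n. (1 - z * (q\<^sup>2) ^ n) * (1 - inverse z * (q\<^sup>2) ^ n) / (1 - q\<^sup>2 * (q\<^sup>2) ^ n)" 1
    by (rule qseries_ratio_gauss_coeff[OF q2])
  have summand: "qpoch z (q\<^sup>2) n * qpoch (inverse z) (q\<^sup>2) n * q ^ n / qpoch q q (2 * n)
      = qseries_term (gauss_coeff z (q\<^sup>2)) (q\<^sup>2) q n" for n
    unfolding qpoch_double_base by (simp add: qseries_term_def gauss_coeff_def mult_ac)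
  have "(\<Sum>n. if n = 0 then 0
        else qpoch z (q\<^sup>2) n * qpoch (inverse z) (q\<^sup>2) n * q ^ n / qpoch q q (2 * n))
      = qseries (gauss_coeff z (q\<^sup>2)) (q\<^sup>2) q - 1"
    unfolding summand qseries_def by (rule suminf_skip_zero[OF summable_qseries_term[OF q], simplified])
  also have "\<dots> = qpoch_inf (q * z) (q\<^sup>2) * qpoch_inf (q * inverse z) (q\<^sup>2) / (qpoch_inf q (q\<^sup>2))\<^sup>2 - 1"
    using gauss_sum[OF q2 q z] by simp
  finally have sum: "(\<Sum>n. if n = 0 then 0
        else qpoch z (q\<^sup>2) n * qpoch (inverse z) (q\<^sup>2) n * q ^ n / qpoch q q (2 * n))
      = qpoch_inf (q * z) (q\<^sup>2) * qpoch_inf (q * inverse z) (q\<^sup>2) / (qpoch_inf q (q\<^sup>2))\<^sup>2 - 1" .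
  have "qpoch_inf q (q\<^sup>2) \<noteq> 0"
    using q q2 by (rule qpoch_inf_neq_0)
  with assms(3,4) show ?thesis
    unfolding S_F3_def sum qpoch_inf_double_base[OF q]
    by (simp add: field_simps power2_eq_square mult.commute)
qed

lemma power2_power2: "(x\<^sup>2)\<^sup>2 = (x::'a::monoid_mult) ^ 4"
  by (simp add: power_mult[symmetric])

lemma qpoch_inf_square_factor:
  fixes q :: complex
  assumes q: "norm q < 1"
  shows "qpoch_inf (q\<^sup>2) (q\<^sup>2) = qpoch_inf (- q) (q\<^sup>2) * qpoch_inf q (q\<^sup>2) * qpoch_inf (q ^ 4) (q ^ 4)"
proof -
  have "norm (q\<^sup>2) < 1"
    using q by (simp add: norm_power power_less_one_iff)
  from qpoch_inf_double_base[OF this] qpoch_inf_uminus_mult[OF this, of q] show ?thesis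
    by (simp add: power2_power2)
qed

lemma add_twice_choose_two: "n + 2 * (n choose 2) = n\<^sup>2"
  by (induction n) (simp_all add: choose_two_Suc power2_eq_square algebra_simps)

lemma bailey_term_minus_q:
  fixes q :: complex
  shows "qseries_term (bailey_coeff b (q\<^sup>2)) (q\<^sup>2) (- q)
           = (\<lambda>n. qpoch b (q\<^sup>2) n * qpoch (q\<^sup>2 / b) (q\<^sup>2) n * (- 1) ^ n * q ^ n\<^sup>2
                / (qpoch (q ^ 4) (q ^ 4) n * qpoch (- q) (q\<^sup>2) n))"
proof
  fix n
  have "(q\<^sup>2) ^ (n choose 2) * (- q) ^ n = (- 1) ^ n * q ^ n\<^sup>2"
    unfolding add_twice_choose_two[symmetric] power_add power_mult[symmetric]
    by (simp add: power_minus[of q])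
  then show "qseries_term (bailey_coeff b (q\<^sup>2)) (q\<^sup>2) (- q) n
      = qpoch b (q\<^sup>2) n * qpoch (q\<^sup>2 / b) (q\<^sup>2) n * (- 1) ^ n * q ^ n\<^sup>2
        / (qpoch (q ^ 4) (q ^ 4) n * qpoch (- q) (q\<^sup>2) n)"
    by (simp add: qseries_term_def bailey_coeff_def power2_power2 mult_ac)
qed

lemma sums_bailey_minus_q:
  fixes q b :: complex
  assumes q: "norm q < 1" and b: "b \<noteq> 0"
  shows "(\<lambda>n. qpoch b (q\<^sup>2) n * qpoch (q\<^sup>2 / b) (q\<^sup>2) n * (- 1) ^ n * q ^ n\<^sup>2
              / (qpoch (q ^ 4) (q ^ 4) n * qpoch (- q) (q\<^sup>2) n))
         sums (qpoch_inf (- (q ^ 3) / b) (q ^ 4) * qpoch_inf (- b * q) (q ^ 4) / qpoch_inf (- q) (q\<^sup>2))"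
proof -
  have q2: "norm (q\<^sup>2) < 1" and mq: "norm (- q) < 1"
    using q by (simp_all add: norm_power power_less_one_iff)
  interpret qseries_ratio "bailey_coeff b (q\<^sup>2)" "q\<^sup>2"
      "\<lambda>n. (1 - b * (q\<^sup>2) ^ n) * (1 - q\<^sup>2 / b * (q\<^sup>2) ^ n) * (q\<^sup>2) ^ n / (1 - (q\<^sup>2)\<^sup>2 * ((q\<^sup>2)\<^sup>2) ^ n)" 0
    by (rule qseries_ratio_bailey_coeff[OF q2])
  have "- q * q\<^sup>2 = - (q ^ 3)"
    by (simp add: power2_eq_square power3_eq_cube)
  with summable_sums[OF summable_qseries_term[OF mq]] bailey_sum[OF q2 mq b] show ?thesis
    unfolding qseries_def bailey_term_minus_q
    by (simp add: power2_power2)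
qed

lemma sums_G4_AG4_summands:
  fixes q z :: complex
  assumes q: "norm q < 1" and z: "z \<noteq> 0" "z \<noteq> -1"
  defines "B b \<equiv> qpoch_inf (- (q ^ 3) / b) (q ^ 4) * qpoch_inf (- b * q) (q ^ 4) / qpoch_inf (- q) (q\<^sup>2)"
  shows "(\<lambda>n. qpoch z (q\<^sup>2) n * qpoch (inverse z) (q\<^sup>2) n * (- 1) ^ n * q ^ n\<^sup>2
              / (qpoch (q ^ 4) (q ^ 4) n * qpoch (- q) (q\<^sup>2) n))
           sums ((z * B z + B (inverse z)) / (1 + z))"
    and "(\<lambda>n. qpoch z (q\<^sup>2) n * qpoch (inverse z) (q\<^sup>2) n * (- 1) ^ n * q ^ (n\<^sup>2 + 2 * n)
              / (qpoch (q ^ 4) (q ^ 4) n * qpoch (- q) (q\<^sup>2) n))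
           sums ((B z + z * B (inverse z)) / (1 + z))"
proof -
  define E where "E n = (- 1) ^ n * q ^ n\<^sup>2 / (qpoch (q ^ 4) (q ^ 4) n * qpoch (- q) (q\<^sup>2) n)" for n
  define Tz where "Tz = (\<lambda>n. qpoch z (q\<^sup>2) n * qpoch (q\<^sup>2 / z) (q\<^sup>2) n * E n)"
  define Ti where "Ti = (\<lambda>n. qpoch (inverse z) (q\<^sup>2) n * qpoch (q\<^sup>2 * z) (q\<^sup>2) n * E n)"
  have "1 + z \<noteq> 0"
    using z(2) by (auto simp: add_eq_0_iff)
  have "q\<^sup>2 / inverse z = q\<^sup>2 * z"
    by (simp add: divide_inverse)
  then have Tz: "Tz sums B z" and Ti: "Ti sums B (inverse z)"
    using sums_bailey_minus_q[OF q z(1)] sums_bailey_minus_q[of q "inverse z"] q z(1)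
    by (simp_all add: B_def Tz_def Ti_def E_def mult_ac)
  have combine1: "A * B * E = (z * (A * P * E) + B * Q * E) / (1 + z)"
    if "(1 + z) * (A * B) = z * (A * P) + B * Q" for A B P Q E :: complex
    using that \<open>1 + z \<noteq> 0\<close> by (simp add: eq_divide_eq) algebra
  have combine2: "X * (A * B) * E = (A * P * E + z * (B * Q * E)) / (1 + z)"
    if "(1 + z) * X * (A * B) = A * P + z * (B * Q)" for A B P Q E X :: complex
    using that \<open>1 + z \<noteq> 0\<close> by (simp add: eq_divide_eq) algebra
  have "qpoch z (q\<^sup>2) n * qpoch (inverse z) (q\<^sup>2) n * (- 1) ^ n * q ^ n\<^sup>2
      / (qpoch (q ^ 4) (q ^ 4) n * qpoch (- q) (q\<^sup>2) n) = (z * Tz n + Ti n) / (1 + z)" for n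
    using combine1[OF qpoch_inverse_pair_split(1)[OF z(1), of "q\<^sup>2" n], of "E n"]
    by (simp add: Tz_def Ti_def E_def mult_ac)
  moreover have "qpoch z (q\<^sup>2) n * qpoch (inverse z) (q\<^sup>2) n * (- 1) ^ n * q ^ (n\<^sup>2 + 2 * n)
      / (qpoch (q ^ 4) (q ^ 4) n * qpoch (- q) (q\<^sup>2) n) = (Tz n + z * Ti n) / (1 + z)" for n
    using combine2[OF qpoch_inverse_pair_split(2)[OF z(1), of "q\<^sup>2" n], of "E n"]
      power_add[of q "n\<^sup>2" "2 * n"] power_mult[of q 2 n]
    by (simp add: Tz_def Ti_def E_def mult_ac)
  ultimately show "(\<lambda>n. qpoch z (q\<^sup>2) n * qpoch (inverse z) (q\<^sup>2) n * (- 1) ^ n * q ^ n\<^sup>2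
              / (qpoch (q ^ 4) (q ^ 4) n * qpoch (- q) (q\<^sup>2) n))
           sums ((z * B z + B (inverse z)) / (1 + z))"
    and "(\<lambda>n. qpoch z (q\<^sup>2) n * qpoch (inverse z) (q\<^sup>2) n * (- 1) ^ n * q ^ (n\<^sup>2 + 2 * n)
              / (qpoch (q ^ 4) (q ^ 4) n * qpoch (- q) (q\<^sup>2) n))
           sums ((B z + z * B (inverse z)) / (1 + z))"
    by (simp_all only:) (intro sums_divide sums_add sums_mult Tz Ti)+
qed

lemma S_AG4_closed_form:
  fixes z q :: complex
  assumes q: "norm q < 1" and z: "z \<noteq> 0" "z \<noteq> -1"
    and D: "qpoch_inf z (q\<^sup>2) \<noteq> 0" "qpoch_inf (inverse z) (q\<^sup>2) \<noteq> 0"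
  shows "S_AG4 z q =
           z * qpoch_inf (- z * q) (q^4) * qpoch_inf (- inverse z * q^3) (q^4) * qpoch_inf (q^4) (q^4)
             / ((1 + z) * qpoch_inf z (q^2) * qpoch_inf (inverse z) (q^2))
         + qpoch_inf (- inverse z * q) (q^4) * qpoch_inf (- z * q^3) (q^4) * qpoch_inf (q^4) (q^4)
             / ((1 + z) * qpoch_inf z (q^2) * qpoch_inf (inverse z) (q^2))
         - qpoch_inf (q^2) (q^2)
             / (qpoch_inf q (q^2) * qpoch_inf z (q^2) * qpoch_inf (inverse z) (q^2))"
proof -
  have args: "- (q ^ 3) / z = - inverse z * q ^ 3" "- (q ^ 3) / inverse z = - z * q ^ 3"
    by (simp_all add: divide_inverse)
  define w where "w = 1 + z"
  note sums = sums_G4_AG4_summands(1)[OF q z, unfolded args, folded w_def]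
  have q2: "norm (q\<^sup>2) < 1" and mq: "norm (- q) < 1"
    using q by (simp_all add: norm_power power_less_one_iff)
  have "qpoch_inf q (q\<^sup>2) \<noteq> 0" "qpoch_inf (- q) (q\<^sup>2) \<noteq> 0" "w \<noteq> 0"
    using qpoch_inf_neq_0[OF q q2] qpoch_inf_neq_0[OF mq q2] z(2) by (auto simp: w_def add_eq_0_iff)
  with D show ?thesis
    unfolding S_AG4_def suminf_skip_zero[OF sums_summable[OF sums]] sums_unique[OF sums, symmetric]
      qpoch_inf_square_factor[OF q] w_def[symmetric]
    by (simp add: field_simps)
qed

lemma S_G4_closed_form:
  fixes z q :: complex
  assumes q: "norm q < 1" and z: "z \<noteq> 0" "z \<noteq> -1"
    and D: "qpoch_inf z (q\<^sup>2) \<noteq> 0" "qpoch_inf (inverse z) (q\<^sup>2) \<noteq> 0"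
  shows "S_G4 z q =
           z * qpoch_inf (- inverse z * q) (q^4) * qpoch_inf (- z * q^3) (q^4) * qpoch_inf (q^4) (q^4)
             / ((1 + z) * qpoch_inf z (q^2) * qpoch_inf (inverse z) (q^2))
         + qpoch_inf (- z * q) (q^4) * qpoch_inf (- inverse z * q^3) (q^4) * qpoch_inf (q^4) (q^4)
             / ((1 + z) * qpoch_inf z (q^2) * qpoch_inf (inverse z) (q^2))
         - qpoch_inf (q^2) (q^2)
             / (qpoch_inf q (q^2) * qpoch_inf z (q^2) * qpoch_inf (inverse z) (q^2))"
proof -
  have args: "- (q ^ 3) / z = - inverse z * q ^ 3" "- (q ^ 3) / inverse z = - z * q ^ 3"
    by (simp_all add: divide_inverse)
  define w where "w = 1 + z"
  note sums = sums_G4_AG4_summands(2)[OF q z, unfolded args, folded w_def]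
  have q2: "norm (q\<^sup>2) < 1" and mq: "norm (- q) < 1"
    using q by (simp_all add: norm_power power_less_one_iff)
  have "qpoch_inf q (q\<^sup>2) \<noteq> 0" "qpoch_inf (- q) (q\<^sup>2) \<noteq> 0" "w \<noteq> 0"
    using qpoch_inf_neq_0[OF q q2] qpoch_inf_neq_0[OF mq q2] z(2) by (auto simp: w_def add_eq_0_iff)
  with D show ?thesis
    unfolding S_G4_def suminf_skip_zero[OF sums_summable[OF sums]] sums_unique[OF sums, symmetric]
      qpoch_inf_square_factor[OF q] w_def[symmetric]
    by (simp add: field_simps)
qed

theorem corollary2p5:
  fixes z q :: complex
  assumes "norm q < 1" and "z \<noteq> 0" and "z \<noteq> -1"
    and "qpoch_inf z (q^2) \<noteq> 0" and "qpoch_inf (inverse z) (q^2) \<noteq> 0"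
  shows "(S_F3 z q =
           qpoch_inf (z*q) (q^2) * qpoch_inf (inverse z * q) (q^2) * qpoch_inf (q^2) (q^2)
             / (qpoch_inf z (q^2) * qpoch_inf (inverse z) (q^2) * qpoch_inf q (q^2))
         - qpoch_inf q q / (qpoch_inf z (q^2) * qpoch_inf (inverse z) (q^2)))
    \<and> (S_G4 z q =
           z * qpoch_inf (- inverse z * q) (q^4) * qpoch_inf (- z * q^3) (q^4) * qpoch_inf (q^4) (q^4)
             / ((1 + z) * qpoch_inf z (q^2) * qpoch_inf (inverse z) (q^2))
         + qpoch_inf (- z * q) (q^4) * qpoch_inf (- inverse z * q^3) (q^4) * qpoch_inf (q^4) (q^4)
             / ((1 + z) * qpoch_inf z (q^2) * qpoch_inf (inverse z) (q^2))
         - qpoch_inf (q^2) (q^2)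
             / (qpoch_inf q (q^2) * qpoch_inf z (q^2) * qpoch_inf (inverse z) (q^2)))
    \<and> (S_AG4 z q =
           z * qpoch_inf (- z * q) (q^4) * qpoch_inf (- inverse z * q^3) (q^4) * qpoch_inf (q^4) (q^4)
             / ((1 + z) * qpoch_inf z (q^2) * qpoch_inf (inverse z) (q^2))
         + qpoch_inf (- inverse z * q) (q^4) * qpoch_inf (- z * q^3) (q^4) * qpoch_inf (q^4) (q^4)
             / ((1 + z) * qpoch_inf z (q^2) * qpoch_inf (inverse z) (q^2))
         - qpoch_inf (q^2) (q^2)
             / (qpoch_inf q (q^2) * qpoch_inf z (q^2) * qpoch_inf (inverse z) (q^2)))"
  using S_F3_closed_form[OF assms(1,2,4,5)] S_G4_closed_form[OF assms] S_AG4_closed_form[OF assms]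
  by blast

end
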